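(* Let $n\ge 2$ and let $\mathbf{A}$ be an $n$-dimensional cyclic Leibniz algebra over $\mathbb{C}$. Then $\mathbf{A}$ is isomorphic to one of the following Leibniz algebras $\mathbf{L}$, each having basis $\{a,a^2,\ldots,a^n\}$ with $a\,a^i=a^{i+1}$ for $1\le i<n$, $a^i v=0$ for all $i\ge2$ and all $v$, and $aa^n$ given by: (1) $aa^n=0$ (nilpotent case); (2) $aa^n=a^n$; (3) $aa^n=a^k+\alpha_{k+1}a^{k+1}+\cdots+\alpha_na^n$, for some $2\le k\le n-1$ and some $(\alpha_{k+1},\ldots,\alpha_n)\in\mathbb{C}^{n-k}$. Moreover the choice is unique in the following sense: algebras from different cases among (1), (2), (3) are non-isomorphic, and two algebras from case (3), with data $(k,(\alpha_{k+1},\ldots,\alpha_n))$ and $(k',(\alpha'_{k'+1},\ldots,\alpha'_n))$, are isomorphic if and only if $k=k'$ and $(\alpha_{k+1},\ldots,\alpha_n)\sim(\alpha'_{k+1},\ldots,\alpha'_n)$; that is, the isomorphism classes in case (3) with a given $k$ correspond to the elements of $\mathbb{C}^{n-k}/\sim$.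
   Context: A (left) Leibniz algebra is a vector space with a bilinear product such that $x(yz)=(xy)z+y(xz)$ for all $x,y,z$. A cyclic Leibniz algebra is a Leibniz algebra generated by a single element. For an element $x$ set $x^1=x$ and $x^{j+1}=x\,x^j$. For $d\ge1$, the equivalence relation $\sim$ on $\mathbb{C}^d$ is defined by $(\gamma_1,\ldots,\gamma_d)\sim(\gamma'_1,\ldots,\gamma'_d)$ iff $(\gamma_1,\gamma_2,\ldots,\gamma_d)=(\omega^d\gamma'_1,\omega^{d-1}\gamma'_2,\ldots,\omega\gamma'_d)$ for some $(d+1)$-th root of unity $\omega$. *)

theory Defs
  imports Main "HOL.Complex"
begin

definition leibniz_algebra ::
  "(complex \<Rightarrow> 'a::ab_group_add \<Rightarrow> 'a) \<Rightarrow> ('a \<Rightarrow> 'a \<Rightarrow> 'a) \<Rightarrow> bool" where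
  "leibniz_algebra scale mult \<longleftrightarrow>
     vector_space scale \<and>
     (\<forall>x y z. mult (x + y) z = mult x z + mult y z) \<and>
     (\<forall>x y z. mult x (y + z) = mult x y + mult x z) \<and>
     (\<forall>c x y. mult (scale c x) y = scale c (mult x y)) \<and>
     (\<forall>c x y. mult x (scale c y) = scale c (mult x y)) \<and>
     (\<forall>x y z. mult x (mult y z) = mult (mult x y) z + mult y (mult x z))"

definition subalg_gen ::
  "(complex \<Rightarrow> 'a::ab_group_add \<Rightarrow> 'a) \<Rightarrow> ('a \<Rightarrow> 'a \<Rightarrow> 'a) \<Rightarrow> 'a set \<Rightarrow> 'a set" where
  "subalg_gen scale mult S = \<Inter>{B. S \<subseteq> B \<and> 0 \<in> B \<and>
      (\<forall>x\<in>B. \<forall>y\<in>B. x + y \<in> B \<and> mult x y \<in> B) \<and> (\<forall>c. \<forall>x\<in>B. scale c x \<in> B)}"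

definition cyclic_alg ::
  "(complex \<Rightarrow> 'a::ab_group_add \<Rightarrow> 'a) \<Rightarrow> ('a \<Rightarrow> 'a \<Rightarrow> 'a) \<Rightarrow> bool" where
  "cyclic_alg scale mult \<longleftrightarrow> (\<exists>x. subalg_gen scale mult {x} = UNIV)"

text \<open>Vectors are coordinate functions v :: nat \<Rightarrow> complex, where v i is
  the coefficient of the basis vector a^i (1 \<le> i \<le> n), zero outside {1..n}.
  The vector c gives a a^n. Products: a a^i = a^(i+1) for i < n, a a^n = c,
  a^i v = 0 for i \<ge> 2.\<close>

definition cvec :: "nat \<Rightarrow> (nat \<Rightarrow> complex) set" where
  "cvec n = {v. \<forall>k. (k < 1 \<or> n < k) \<longrightarrow> v k = 0}"

definition cyc_mult :: "nat \<Rightarrow> (nat \<Rightarrow> complex) \<Rightarrow> (nat \<Rightarrow> complex) \<Rightarrow> (nat \<Rightarrow> complex) \<Rightarrow> (nat \<Rightarrow> complex)" where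
  "cyc_mult n c u v = (\<lambda>k. u 1 * ((if 2 \<le> k \<and> k \<le> n then v (k - 1) else 0) + v n * c k))"

definition c_nil :: "nat \<Rightarrow> nat \<Rightarrow> complex" where
  "c_nil n = (\<lambda>j. 0)"

definition c_id :: "nat \<Rightarrow> nat \<Rightarrow> complex" where
  "c_id n = (\<lambda>j. if j = n then 1 else 0)"

definition c_k :: "nat \<Rightarrow> nat \<Rightarrow> (nat \<Rightarrow> complex) \<Rightarrow> nat \<Rightarrow> complex" where
  "c_k n k \<alpha> = (\<lambda>j. if j = k then 1 else if k < j \<and> j \<le> n then \<alpha> j else 0)"

definition iso_to_model ::
  "(complex \<Rightarrow> 'a::ab_group_add \<Rightarrow> 'a) \<Rightarrow> ('a \<Rightarrow> 'a \<Rightarrow> 'a) \<Rightarrow> nat \<Rightarrow> (nat \<Rightarrow> complex)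
     \<Rightarrow> ('a \<Rightarrow> nat \<Rightarrow> complex) \<Rightarrow> bool" where
  "iso_to_model scale mult n c f \<longleftrightarrow>
     bij_betw f UNIV (cvec n) \<and>
     (\<forall>x y. f (x + y) = (\<lambda>k. f x k + f y k)) \<and>
     (\<forall>a x. f (scale a x) = (\<lambda>k. a * f x k)) \<and>
     (\<forall>x y. f (mult x y) = cyc_mult n c (f x) (f y))"

definition models_iso :: "nat \<Rightarrow> (nat \<Rightarrow> complex) \<Rightarrow> (nat \<Rightarrow> complex) \<Rightarrow> bool" where
  "models_iso n c c' \<longleftrightarrow> (\<exists>g. bij_betw g (cvec n) (cvec n) \<and>
     (\<forall>x\<in>cvec n. \<forall>y\<in>cvec n. g (\<lambda>k. x k + y k) = (\<lambda>k. g x k + g y k)) \<and>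
     (\<forall>a. \<forall>x\<in>cvec n. g (\<lambda>k. a * x k) = (\<lambda>k. a * g x k)) \<and>
     (\<forall>x\<in>cvec n. \<forall>y\<in>cvec n. g (cyc_mult n c x y) = cyc_mult n c' (g x) (g y)))"

definition tuple_sim :: "nat \<Rightarrow> (nat \<Rightarrow> complex) \<Rightarrow> (nat \<Rightarrow> complex) \<Rightarrow> bool" where
  "tuple_sim d \<gamma> \<gamma>' \<longleftrightarrow> (\<exists>\<omega>::complex. \<omega> ^ (d + 1) = 1 \<and>
     (\<forall>i\<in>{1..d}. \<gamma> i = \<omega> ^ (d + 1 - i) * \<gamma>' i))"

end

theory Submission
  imports Defs
begin

text \<open>Let \<open>a\<close> generate \<open>A\<close>. The Leibniz identity gives \<open>(a a) z = 0\<close> and, inductively,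
  \<open>a\<^sup>i z = 0\<close> for \<open>i \<ge> 2\<close>; hence the left powers \<open>a, a\<^sup>2, \<dots>\<close> span a subalgebra, i.e. all of \<open>A\<close>,
  and \<open>a, \<dots>, a\<^sup>n\<close> is a basis in which the only free structure constant is the vector
  \<open>c = a a\<^sup>n\<close>, with \<open>c\<^sub>1 = 0\<close>. The substitution \<open>a \<mapsto> t a\<close> replaces \<open>c\<^sub>k\<close> by \<open>t\<^sup>k\<^sup>-\<^sup>n\<^sup>-\<^sup>1 c\<^sub>k\<close>, and a
  suitable \<open>t\<close> normalises the lowest nonzero \<open>c\<^sub>k\<close> to \<open>1\<close>. Conversely, an isomorphism of two models
  sends \<open>a\<close> to an element \<open>u\<close> with nonzero \<open>a\<close>-coordinate \<open>t\<close>; left multiplication by \<open>u\<close> is \<open>t\<close>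
  times the companion-type shift of the target, whose Cayley--Hamilton relation forces the two
  parameter vectors to differ exactly by the substitution \<open>a \<mapsto> t a\<close>. On the normal forms this
  is the relation \<open>\<sim>\<close>.\<close>

section \<open>Coordinate vectors\<close>

definition basis_vec :: "nat \<Rightarrow> nat \<Rightarrow> complex" where
  "basis_vec i = (\<lambda>k. if k = i then 1 else 0)"

definition coord_linear :: "((nat \<Rightarrow> complex) \<Rightarrow> (nat \<Rightarrow> complex)) \<Rightarrow> bool" where
  "coord_linear F \<longleftrightarrow> (\<forall>a b x y. F (\<lambda>k. a * x k + b * y k) = (\<lambda>k. a * F x k + b * F y k))"

lemma coord_linear_zero:
  assumes "coord_linear F"
  shows "F (\<lambda>k. 0) = (\<lambda>k. 0)"
  using assms[unfolded coord_linear_def, rule_format, where a = 0 and b = 0] by simp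

lemma coord_linear_scale:
  assumes "coord_linear F"
  shows "F (\<lambda>k. a * x k) = (\<lambda>k. a * F x k)"
  using assms[unfolded coord_linear_def, rule_format, where a = a and b = 0 and x = x] by simp

lemma coord_linear_sum:
  assumes "coord_linear F"
  shows "F (\<lambda>k. \<Sum>i\<in>I. a i * w i k) = (\<lambda>k. \<Sum>i\<in>I. a i * F (w i) k)"
proof (induction I rule: infinite_finite_induct)
  case (insert i I)
  have "F (\<lambda>k. \<Sum>i\<in>insert i I. a i * w i k) = F (\<lambda>k. a i * w i k + 1 * (\<Sum>i\<in>I. a i * w i k))"
    using insert by simp
  also have "\<dots> = (\<lambda>k. a i * F (w i) k + 1 * F (\<lambda>k. \<Sum>i\<in>I. a i * w i k) k)"
    using assms unfolding coord_linear_def by metis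
  finally show ?case using insert by simp
qed (use coord_linear_zero[OF assms] in simp_all)

lemma coord_linear_funpow: "coord_linear F \<Longrightarrow> coord_linear (F ^^ m)"
  by (induction m) (simp_all add: coord_linear_def)

lemma basis_vec_in_cvec: "1 \<le> i \<Longrightarrow> i \<le> n \<Longrightarrow> basis_vec i \<in> cvec n"
  unfolding cvec_def basis_vec_def by auto

lemma cvec_sum: "(\<And>i. i \<in> I \<Longrightarrow> w i \<in> cvec n) \<Longrightarrow> (\<lambda>k. \<Sum>i\<in>I. a i * w i k) \<in> cvec n"
  unfolding cvec_def by auto

lemma sum_basis_vec:
  "(\<Sum>j<n. a j * basis_vec (Suc j) k) = (if 1 \<le> k \<and> k \<le> n then a (k - 1) else 0)"
proof (cases "1 \<le> k \<and> k \<le> n")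
  case True
  then obtain i where i: "k = Suc i" "i < n" by (cases k) auto
  have "(\<Sum>j<n. a j * basis_vec (Suc j) k) = (\<Sum>j\<in>{i}. a j * basis_vec (Suc j) k)"
    by (rule sum.mono_neutral_right) (use i in \<open>auto simp: basis_vec_def\<close>)
  then show ?thesis using i by (simp add: basis_vec_def)
qed (auto simp: basis_vec_def intro: sum.neutral)

lemma cvec_eq_sum_basis_vec: "u \<in> cvec n \<Longrightarrow> u = (\<lambda>k. \<Sum>j<n. u (Suc j) * basis_vec (Suc j) k)"
  unfolding sum_basis_vec by (rule ext) (auto simp: cvec_def not_less_eq_eq)

section \<open>Left multiplication by the generator of a model\<close>

definition gen_mult :: "nat \<Rightarrow> (nat \<Rightarrow> complex) \<Rightarrow> (nat \<Rightarrow> complex) \<Rightarrow> nat \<Rightarrow> complex" where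
  "gen_mult n c = cyc_mult n c (basis_vec 1)"

lemma cyc_mult_eq_gen_mult: "cyc_mult n c u v = (\<lambda>k. u 1 * gen_mult n c v k)"
  by (simp add: cyc_mult_def gen_mult_def basis_vec_def)

lemma gen_mult_apply:
  "gen_mult n c v k = (if 2 \<le> k \<and> k \<le> n then v (k - 1) else 0) + v n * c k"
  by (simp add: gen_mult_def cyc_mult_def basis_vec_def)

lemma coord_linear_gen_mult: "coord_linear (gen_mult n c)"
  unfolding coord_linear_def gen_mult_apply by (auto simp: algebra_simps)

lemma gen_mult_in_cvec: "c \<in> cvec n \<Longrightarrow> gen_mult n c v \<in> cvec n"
  unfolding cvec_def gen_mult_apply by auto

lemma gen_mult_basis_vec:
  "1 \<le> i \<Longrightarrow> i \<le> n \<Longrightarrow> gen_mult n c (basis_vec i) = (if i < n then basis_vec (Suc i) else c)"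
  unfolding gen_mult_apply by (auto simp: basis_vec_def fun_eq_iff)

lemma funpow_gen_mult_basis_vec:
  "j < n \<Longrightarrow> (gen_mult n c ^^ j) (basis_vec 1) = basis_vec (Suc j)"
  by (induction j) (simp_all add: gen_mult_basis_vec)

lemma funpow_gen_mult_basis_vec_dim:
  "1 \<le> n \<Longrightarrow> (gen_mult n c ^^ n) (basis_vec 1) = c"
  using funpow_gen_mult_basis_vec[of "n - 1" n c] gen_mult_basis_vec[of n n c]
  by (cases n) simp_all

text \<open>Cayley--Hamilton for left multiplication by the generator: its characteristic polynomial
  is \<open>X\<^sup>n - \<Sum>\<^sub>j c\<^sub>j\<^sub>+\<^sub>1 X\<^sup>j\<close>, which kills the cyclic vector \<open>a\<close> and therefore everything.\<close>

lemma gen_mult_cayley_hamilton: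
  assumes c: "c \<in> cvec n" and y: "y \<in> cvec n"
  shows "(gen_mult n c ^^ n) y = (\<lambda>k. \<Sum>j<n. c (Suc j) * (gen_mult n c ^^ j) y k)"
proof -
  let ?T = "gen_mult n c"
  define b where "b j = (if j = n then - 1 else c (Suc j))" for j
  define R where "R y = (\<lambda>k. \<Sum>j\<le>n. b j * (?T ^^ j) y k)" for y
  have lin: "coord_linear (?T ^^ m)" for m
    by (rule coord_linear_funpow[OF coord_linear_gen_mult])
  have R_eq: "R y = (\<lambda>k. (\<Sum>j<n. c (Suc j) * (?T ^^ j) y k) - (?T ^^ n) y k)" for y
    by (simp add: R_def b_def lessThan_Suc_atMost[symmetric])
  have R_sum: "R (\<lambda>k. \<Sum>i\<in>I. a i * w i k) = (\<lambda>k. \<Sum>i\<in>I. a i * R (w i) k)" for I :: "nat set" and a w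
    unfolding R_def coord_linear_sum[OF lin]
    by (simp add: sum_distrib_left algebra_simps sum.swap[of _ I])
  have R_commute: "R ((?T ^^ i) y) = (?T ^^ i) (R y)" for i y
  proof -
    have "(?T ^^ j) ((?T ^^ i) y) = (?T ^^ i) ((?T ^^ j) y)" for j
      by (metis add.commute comp_apply funpow_add)
    then show ?thesis unfolding R_def coord_linear_sum[OF lin] by simp
  qed
  have R_basis_vec: "R (basis_vec (Suc i)) = (\<lambda>k. 0)" if "i < n" for i
  proof -
    have "(\<Sum>j<n. c (Suc j) * (?T ^^ j) (basis_vec 1) k) = c k" for k
    proof -
      have "(\<Sum>j<n. c (Suc j) * (?T ^^ j) (basis_vec 1) k) = (\<Sum>j<n. c (Suc j) * basis_vec (Suc j) k)"
        by (intro sum.cong refl) (simp only: lessThan_iff funpow_gen_mult_basis_vec)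
      then show ?thesis using fun_cong[OF cvec_eq_sum_basis_vec[OF c], of k] by simp
    qed
    then have "R (basis_vec 1) = (\<lambda>k. 0)"
      using that by (simp add: R_eq funpow_gen_mult_basis_vec_dim del: One_nat_def)
    then show ?thesis
      using R_commute[of i "basis_vec 1"] coord_linear_zero[OF lin]
        funpow_gen_mult_basis_vec[OF that] by metis
  qed
  have "R y = (\<lambda>k. 0)"
    by (subst cvec_eq_sum_basis_vec[OF y], subst R_sum) (simp add: R_basis_vec)
  then show ?thesis
    unfolding R_eq by (metis (no_types, lifting) eq_iff_diff_eq_0)
qed

section \<open>Isomorphisms between models\<close>

text \<open>The substitution \<open>a \<mapsto> t a\<close> (\<open>t \<noteq> 0\<close>) maps the model with \<open>a a\<^sup>n = c\<close> onto the model with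
  \<open>a a\<^sup>n = c'\<close>; it multiplies the coordinate of \<open>a\<^sup>k\<close> by \<open>t\<^sup>k\<close>.\<close>

definition rescaling_equiv :: "nat \<Rightarrow> (nat \<Rightarrow> complex) \<Rightarrow> (nat \<Rightarrow> complex) \<Rightarrow> bool" where
  "rescaling_equiv n c c' \<longleftrightarrow> (\<exists>t. t \<noteq> 0 \<and> (\<forall>k. t ^ k * c k = t ^ (n + 1) * c' k))"

definition rescale :: "complex \<Rightarrow> (nat \<Rightarrow> complex) \<Rightarrow> nat \<Rightarrow> complex" where
  "rescale t v = (\<lambda>k. t ^ k * v k)"

lemma rescale_cyc_mult:
  assumes "\<forall>k. t ^ k * c k = t ^ (n + 1) * c' k"
  shows "rescale t (cyc_mult n c u v) = cyc_mult n c' (rescale t u) (rescale t v)"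
proof
  fix k
  define s where "s w = (if 2 \<le> k \<and> k \<le> n then w (k - 1) else 0)" for w :: "nat \<Rightarrow> complex"
  have shift: "t ^ k * s v = t * s (rescale t v)"
    by (cases k) (auto simp: s_def rescale_def)
  have ck: "t ^ k * c k = t * (t ^ n * c' k)"
    using assms by simp
  have "rescale t (cyc_mult n c u v) k = u 1 * (t ^ k * s v) + u 1 * v n * (t ^ k * c k)"
    by (simp add: rescale_def cyc_mult_def s_def algebra_simps)
  also have "\<dots> = cyc_mult n c' (rescale t u) (rescale t v) k"
    unfolding shift ck by (simp add: rescale_def cyc_mult_def s_def algebra_simps)
  finally show "rescale t (cyc_mult n c u v) k = cyc_mult n c' (rescale t u) (rescale t v) k" .
qed

lemma bij_betw_rescale: "t \<noteq> 0 \<Longrightarrow> bij_betw (rescale t) (cvec n) (cvec n)"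
  by (rule bij_betw_byWitness[where f' = "rescale (1 / t)"])
    (auto simp: rescale_def cvec_def power_divide)

lemma models_iso_if_rescaling_equiv:
  assumes "rescaling_equiv n c c'"
  shows "models_iso n c c'"
proof -
  obtain t where t: "t \<noteq> 0" "\<forall>k. t ^ k * c k = t ^ (n + 1) * c' k"
    using assms unfolding rescaling_equiv_def by blast
  show ?thesis
    unfolding models_iso_def
  proof (intro exI[of _ "rescale t"] conjI ballI allI)
    show "bij_betw (rescale t) (cvec n) (cvec n)"
      using bij_betw_rescale[OF t(1)] .
    show "rescale t (cyc_mult n c x y) = cyc_mult n c' (rescale t x) (rescale t y)" for x y
      using rescale_cyc_mult[OF t(2)] .
  qed (simp_all add: rescale_def distrib_left mult.left_commute)
qed

lemma iso_to_model_if_rescaling_equiv: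
  assumes "iso_to_model scale mult n c f" and "rescaling_equiv n c c'"
  shows "\<exists>f'. iso_to_model scale mult n c' f'"
proof -
  obtain t where t: "t \<noteq> 0" "\<forall>k. t ^ k * c k = t ^ (n + 1) * c' k"
    using assms(2) unfolding rescaling_equiv_def by blast
  have "bij_betw (rescale t \<circ> f) UNIV (cvec n)"
    using assms(1) bij_betw_trans bij_betw_rescale[OF t(1)] unfolding iso_to_model_def by blast
  then have "iso_to_model scale mult n c' (rescale t \<circ> f)"
    using assms(1) rescale_cyc_mult[OF t(2)]
    by (simp add: iso_to_model_def rescale_def distrib_left mult.left_commute)
  then show ?thesis by blast
qed

locale model_iso_map =
  fixes n :: nat and c c' :: "nat \<Rightarrow> complex" and g :: "(nat \<Rightarrow> complex) \<Rightarrow> nat \<Rightarrow> complex"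
  assumes two_le_n: "2 \<le> n" and c_in_cvec: "c \<in> cvec n" and c'_in_cvec: "c' \<in> cvec n"
    and bij: "bij_betw g (cvec n) (cvec n)"
    and add: "\<And>x y. x \<in> cvec n \<Longrightarrow> y \<in> cvec n \<Longrightarrow> g (\<lambda>k. x k + y k) = (\<lambda>k. g x k + g y k)"
    and scale: "\<And>a x. x \<in> cvec n \<Longrightarrow> g (\<lambda>k. a * x k) = (\<lambda>k. a * g x k)"
    and mult: "\<And>x y. x \<in> cvec n \<Longrightarrow> y \<in> cvec n \<Longrightarrow> g (cyc_mult n c x y) = cyc_mult n c' (g x) (g y)"
begin

lemma map_in_cvec: "x \<in> cvec n \<Longrightarrow> g x \<in> cvec n"
  using bij by (simp add: bij_betw_apply)

lemma map_zero: "g (\<lambda>k. 0) = (\<lambda>k. 0)"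
  using scale[of "\<lambda>k. 0" 0] by (simp add: cvec_def)

lemma map_sum:
  assumes "\<And>i. i \<in> I \<Longrightarrow> w i \<in> cvec n"
  shows "g (\<lambda>k. \<Sum>i\<in>I. a i * w i k) = (\<lambda>k. \<Sum>i\<in>I. a i * g (w i) k)"
  using assms
proof (induction I rule: infinite_finite_induct)
  case (insert i I)
  have "(\<lambda>k. a i * w i k) \<in> cvec n" "(\<lambda>k. \<Sum>i\<in>I. a i * w i k) \<in> cvec n"
    using insert.prems by (auto simp: cvec_def)
  then show ?case
    using insert add scale by simp
qed (simp_all add: map_zero)

definition gen_coeff :: complex where
  "gen_coeff = g (basis_vec 1) 1"

text \<open>The elements with vanishing first coordinate are exactly the left annihilators, and \<open>g\<close>
  preserves left annihilators; hence \<open>g\<close> only rescales the first coordinate.\<close>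

lemma first_coord:
  assumes x: "x \<in> cvec n"
  shows "g x 1 = x 1 * gen_coeff"
proof -
  have e1: "basis_vec 1 \<in> cvec n"
    using two_le_n by (simp add: basis_vec_in_cvec)
  obtain y where y: "y \<in> cvec n" "g y = basis_vec 1"
    using bij e1 by (metis bij_betw_iff_bijections)
  have annihilator: "g z 1 = 0" if z: "z \<in> cvec n" "z 1 = 0" for z
  proof -
    have "cyc_mult n c' (g z) (basis_vec 1) = (\<lambda>k. 0)"
      using mult[OF z(1) y(1)] z(2) y(2) map_zero by (simp add: cyc_mult_def)
    then have "cyc_mult n c' (g z) (basis_vec 1) 2 = 0"
      by simp
    then show ?thesis
      using two_le_n by (simp add: cyc_mult_def basis_vec_def)
  qed
  define z where "z = (\<lambda>k. x k + (- x 1) * basis_vec 1 k)"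
  have z: "z \<in> cvec n" "z 1 = 0"
    using x e1 by (auto simp: z_def cvec_def basis_vec_def)
  have "(\<lambda>k. x 1 * basis_vec 1 k) \<in> cvec n"
    using e1 by (simp add: cvec_def)
  then have "g (\<lambda>k. z k + x 1 * basis_vec 1 k) = (\<lambda>k. g z k + x 1 * g (basis_vec 1) k)"
    using add[OF z(1)] scale[OF e1] by simp
  moreover have "(\<lambda>k. z k + x 1 * basis_vec 1 k) = x"
    by (simp add: z_def)
  ultimately have "g x = (\<lambda>k. g z k + x 1 * g (basis_vec 1) k)"
    by simp
  then show ?thesis
    using annihilator[OF z] by (simp add: gen_coeff_def)
qed

lemma gen_coeff_nonzero: "gen_coeff \<noteq> 0"
proof -
  have "basis_vec 1 \<in> cvec n"
    using two_le_n by (simp add: basis_vec_in_cvec)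
  then obtain y where y: "y \<in> cvec n" "g y = basis_vec 1"
    using bij by (metis bij_betw_iff_bijections)
  show ?thesis
    using first_coord[OF y(1)] y(2) by (auto simp: basis_vec_def)
qed

lemma gen_mult_commute:
  assumes "y \<in> cvec n"
  shows "g (gen_mult n c y) = (\<lambda>k. gen_coeff * gen_mult n c' (g y) k)"
proof -
  have "g (gen_mult n c y) = cyc_mult n c' (g (basis_vec 1)) (g y)"
    using mult[of "basis_vec 1" y] assms two_le_n basis_vec_in_cvec[of 1 n] by (simp add: gen_mult_def)
  then show ?thesis
    by (simp add: cyc_mult_eq_gen_mult gen_coeff_def)
qed

lemma funpow_gen_mult_commute:
  "y \<in> cvec n \<Longrightarrow> g ((gen_mult n c ^^ j) y) = (\<lambda>k. gen_coeff ^ j * (gen_mult n c' ^^ j) (g y) k)"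
proof (induction j)
  case (Suc j)
  have "(gen_mult n c ^^ j) y \<in> cvec n"
    using Suc.prems c_in_cvec by (cases j) (simp_all add: gen_mult_in_cvec)
  then show ?case
    using Suc by (simp add: gen_mult_commute coord_linear_scale[OF coord_linear_gen_mult] mult.assoc)
qed simp

text \<open>Transport \<open>a\<^sup>n\<^sup>+\<^sup>1 = \<Sum>\<^sub>j c\<^sub>j a\<^sup>j\<close> along \<open>g\<close> and compare it with Cayley--Hamilton in the target.\<close>

lemma c_eq_rescaled: "c = (\<lambda>k. \<Sum>j<n. (c' (Suc j) * gen_coeff ^ (n - j)) * basis_vec (Suc j) k)"
proof -
  let ?T = "gen_mult n c" and ?T' = "gen_mult n c'"
  have e1: "basis_vec 1 \<in> cvec n"
    using two_le_n by (simp add: basis_vec_in_cvec)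
  define u where "u = g (basis_vec 1)"
  have basis_image: "g (basis_vec (Suc j)) = (\<lambda>k. gen_coeff ^ j * (?T' ^^ j) u k)" if "j < n" for j
    using funpow_gen_mult_commute[OF e1, of j] funpow_gen_mult_basis_vec[OF that] unfolding u_def by metis
  have "g c = g ((?T ^^ n) (basis_vec 1))"
    using funpow_gen_mult_basis_vec_dim[of n c] two_le_n by simp
  also have "\<dots> = (\<lambda>k. \<Sum>j<n. gen_coeff ^ n * (c' (Suc j) * (?T' ^^ j) u k))"
    using funpow_gen_mult_commute[OF e1, of n]
      gen_mult_cayley_hamilton[OF c'_in_cvec map_in_cvec[OF e1]] by (simp add: sum_distrib_left u_def)
  also have "\<dots> = (\<lambda>k. \<Sum>j<n. (c' (Suc j) * gen_coeff ^ (n - j)) * (gen_coeff ^ j * (?T' ^^ j) u k))"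
  proof (intro ext sum.cong refl)
    fix k j
    assume "j \<in> {..<n}"
    then have "gen_coeff ^ n = gen_coeff ^ (n - j) * gen_coeff ^ j"
      by (simp flip: power_add)
    show "gen_coeff ^ n * (c' (Suc j) * (?T' ^^ j) u k)
        = (c' (Suc j) * gen_coeff ^ (n - j)) * (gen_coeff ^ j * (?T' ^^ j) u k)"
      unfolding \<open>gen_coeff ^ n = gen_coeff ^ (n - j) * gen_coeff ^ j\<close> by (simp only: mult_ac)
  qed
  also have "\<dots> = (\<lambda>k. \<Sum>j<n. (c' (Suc j) * gen_coeff ^ (n - j)) * g (basis_vec (Suc j)) k)"
    by (intro ext sum.cong refl) (simp add: basis_image)
  also have "\<dots> = g (\<lambda>k. \<Sum>j<n. (c' (Suc j) * gen_coeff ^ (n - j)) * basis_vec (Suc j) k)"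
    by (rule map_sum[symmetric]) (simp add: basis_vec_in_cvec)
  finally have "g c = g (\<lambda>k. \<Sum>j<n. (c' (Suc j) * gen_coeff ^ (n - j)) * basis_vec (Suc j) k)" .
  moreover have "(\<lambda>k. \<Sum>j<n. (c' (Suc j) * gen_coeff ^ (n - j)) * basis_vec (Suc j) k) \<in> cvec n"
    by (rule cvec_sum) (simp add: basis_vec_in_cvec)
  ultimately show ?thesis
    using inj_onD[OF bij_betw_imp_inj_on[OF bij]] c_in_cvec by blast
qed

lemma rescaling_equiv: "rescaling_equiv n c c'"
  unfolding rescaling_equiv_def
proof (intro exI conjI allI)
  show "gen_coeff \<noteq> 0"
    by (rule gen_coeff_nonzero)
  show "gen_coeff ^ k * c k = gen_coeff ^ (n + 1) * c' k" for k
  proof (cases "1 \<le> k \<and> k \<le> n")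
    case True
    then have "gen_coeff ^ (n + 1) = gen_coeff ^ k * gen_coeff ^ (n - (k - 1))"
      by (simp flip: power_add)
    then show ?thesis
      using True by (subst c_eq_rescaled) (simp add: sum_basis_vec)
  next
    case False
    then have "c' k = 0"
      using c'_in_cvec by (auto simp: cvec_def not_less_eq_eq)
    then show ?thesis
      using False by (subst c_eq_rescaled) (simp add: sum_basis_vec)
  qed
qed

end

lemma models_iso_iff_rescaling_equiv:
  assumes "2 \<le> n" "c \<in> cvec n" "c' \<in> cvec n"
  shows "models_iso n c c' \<longleftrightarrow> rescaling_equiv n c c'"
proof
  assume "models_iso n c c'"
  then obtain g where "bij_betw g (cvec n) (cvec n)"
    and "\<forall>x\<in>cvec n. \<forall>y\<in>cvec n. g (\<lambda>k. x k + y k) = (\<lambda>k. g x k + g y k)"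
    and "\<forall>a. \<forall>x\<in>cvec n. g (\<lambda>k. a * x k) = (\<lambda>k. a * g x k)"
    and "\<forall>x\<in>cvec n. \<forall>y\<in>cvec n. g (cyc_mult n c x y) = cyc_mult n c' (g x) (g y)"
    unfolding models_iso_def by blast
  then have "model_iso_map n c c' g"
    using assms by unfold_locales simp_all
  then show "rescaling_equiv n c c'"
    by (rule model_iso_map.rescaling_equiv)
qed (rule models_iso_if_rescaling_equiv)

section \<open>Normal forms\<close>

lemma complex_root_exists:
  assumes "c \<noteq> 0" "0 < m"
  shows "\<exists>t::complex. t \<noteq> 0 \<and> t ^ m = c"
proof -
  obtain t where "t ^ m = c"
    using bij_betw_apply[OF bij_betw_nth_root_unity[OF assms], of 1] by auto
  then show ?thesis
    using assms by auto
qed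

text \<open>Choosing \<open>t\<close> with \<open>t\<^sup>n\<^sup>+\<^sup>1\<^sup>-\<^sup>k = c\<^sub>k\<close> for the lowest nonzero coefficient \<open>c\<^sub>k\<close> makes that coefficient \<open>1\<close>.\<close>

lemma rescaling_equiv_normal_form:
  assumes c: "c \<in> cvec n" and c1: "c 1 = 0"
  shows "rescaling_equiv n c (c_nil n) \<or> rescaling_equiv n c (c_id n)
     \<or> (\<exists>k \<alpha>. 2 \<le> k \<and> k \<le> n - 1 \<and> rescaling_equiv n c (c_k n k \<alpha>))"
proof (cases "\<forall>j. c j = 0")
  case True
  then have "rescaling_equiv n c (c_nil n)"
    unfolding rescaling_equiv_def c_nil_def by (intro exI[of _ 1]) simp
  then show ?thesis ..
next
  case False
  define k where "k = (LEAST j. c j \<noteq> 0)"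
  have ck: "c k \<noteq> 0"
    unfolding k_def by (rule LeastI_ex) (use False in blast)
  have below: "c j = 0" if "j < k" for j
    using that not_less_Least unfolding k_def by blast
  have "c 0 = 0" "\<forall>j>n. c j = 0"
    using c by (auto simp: cvec_def)
  then have "k \<noteq> 0" "k \<noteq> 1" "\<not> n < k"
    using ck c1 by metis+
  then have k: "2 \<le> k" "k \<le> n"
    by simp_all
  obtain t where t: "t \<noteq> 0" "t ^ (n + 1 - k) = c k"
    using complex_root_exists[OF ck, of "n + 1 - k"] k by auto
  define c' where "c' j = c j * t ^ j / t ^ (n + 1)" for j
  have rescaled: "rescaling_equiv n c c'"
    unfolding rescaling_equiv_def c'_def using t(1) by (intro exI[of _ t]) simp
  have "t ^ (n + 1) = t ^ k * t ^ (n + 1 - k)"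
    using k by (simp flip: power_add)
  then have c'k: "c' k = 1"
    using t ck by (simp add: c'_def)
  have c'_zero: "c' j = 0" if "\<not> (k \<le> j \<and> j \<le> n)" for j
    using that below c by (auto simp: c'_def cvec_def)
  show ?thesis
  proof (cases "k = n")
    case True
    then have "c' = c_id n"
      using c'k c'_zero by (auto simp: c_id_def fun_eq_iff)
    then show ?thesis
      using rescaled by blast
  next
    case False
    then have "c' = c_k n k c'"
      using c'k c'_zero by (auto simp: c_k_def fun_eq_iff)
    moreover have "k \<le> n - 1"
      using k False by simp
    ultimately show ?thesis
      using rescaled k by metis
  qed
qed

lemma not_rescaling_equiv_nil_id: "\<not> rescaling_equiv n (c_nil n) (c_id n)"
proof
  assume "rescaling_equiv n (c_nil n) (c_id n)"
  then obtain t where "t \<noteq> 0" "\<And>j. t ^ j * c_nil n j = t ^ (n + 1) * c_id n j"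
    unfolding rescaling_equiv_def by blast
  then have "t ^ n * c_nil n n = t ^ (n + 1) * c_id n n" "t \<noteq> 0"
    by blast+
  then show False
    by (simp add: c_nil_def c_id_def)
qed

lemma not_rescaling_equiv_nil_k: "\<not> rescaling_equiv n (c_nil n) (c_k n k \<alpha>)"
proof
  assume "rescaling_equiv n (c_nil n) (c_k n k \<alpha>)"
  then obtain t where "t \<noteq> 0" "\<And>j. t ^ j * c_nil n j = t ^ (n + 1) * c_k n k \<alpha> j"
    unfolding rescaling_equiv_def by blast
  then have "t ^ k * c_nil n k = t ^ (n + 1) * c_k n k \<alpha> k" "t \<noteq> 0"
    by blast+
  then show False
    by (simp add: c_nil_def c_k_def)
qed

lemma not_rescaling_equiv_id_k: "k \<noteq> n \<Longrightarrow> \<not> rescaling_equiv n (c_id n) (c_k n k \<alpha>)"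
proof
  assume "k \<noteq> n" "rescaling_equiv n (c_id n) (c_k n k \<alpha>)"
  then obtain t where "t \<noteq> 0" "\<And>j. t ^ j * c_id n j = t ^ (n + 1) * c_k n k \<alpha> j"
    unfolding rescaling_equiv_def by blast
  then have "t ^ k * c_id n k = t ^ (n + 1) * c_k n k \<alpha> k" "t \<noteq> 0"
    by blast+
  then show False
    using \<open>k \<noteq> n\<close> by (simp add: c_id_def c_k_def)
qed

lemma rescaling_equiv_c_k_imp_eq:
  assumes "rescaling_equiv n (c_k n k \<alpha>) (c_k n k' \<alpha>')"
  shows "k = k'"
proof (rule ccontr)
  obtain t where t: "t \<noteq> 0" and rel: "\<And>j. t ^ j * c_k n k \<alpha> j = t ^ (n + 1) * c_k n k' \<alpha>' j"
    using assms unfolding rescaling_equiv_def by blast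
  assume "k \<noteq> k'"
  then consider "k < k'" | "k' < k"
    by linarith
  then show False
  proof cases
    case 1
    then show False
      using rel[of k] t by (simp add: c_k_def)
  next
    case 2
    then show False
      using rel[of k'] t by (simp add: c_k_def)
  qed
qed

lemma rescaling_equiv_c_k_iff:
  assumes "k \<le> n"
  shows "rescaling_equiv n (c_k n k \<alpha>) (c_k n k \<alpha>') \<longleftrightarrow>
    tuple_sim (n - k) (\<lambda>i. \<alpha> (k + i)) (\<lambda>i. \<alpha>' (k + i))"
proof
  assume "rescaling_equiv n (c_k n k \<alpha>) (c_k n k \<alpha>')"
  then obtain t where t: "t \<noteq> 0" and rel: "\<And>j. t ^ j * c_k n k \<alpha> j = t ^ (n + 1) * c_k n k \<alpha>' j"
    unfolding rescaling_equiv_def by blast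
  have split: "t ^ (n + 1) = t ^ (k + i) * t ^ (n - k + 1 - i)" if "i \<le> n - k + 1" for i
    using that assms by (simp flip: power_add)
  have "t ^ (n - k + 1) = 1"
    using rel[of k] split[of 0] t by (simp add: c_k_def)
  moreover have "\<alpha> (k + i) = t ^ (n - k + 1 - i) * \<alpha>' (k + i)" if "i \<in> {1..n - k}" for i
  proof -
    have "k < k + i" "k + i \<le> n"
      using that by auto
    then show ?thesis
      using rel[of "k + i"] split[of i] that t by (simp add: c_k_def)
  qed
  ultimately show "tuple_sim (n - k) (\<lambda>i. \<alpha> (k + i)) (\<lambda>i. \<alpha>' (k + i))"
    unfolding tuple_sim_def by blast
next
  assume "tuple_sim (n - k) (\<lambda>i. \<alpha> (k + i)) (\<lambda>i. \<alpha>' (k + i))"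
  then obtain \<omega> :: complex where \<omega>: "\<omega> ^ (n - k + 1) = 1"
    and rel: "\<And>i. i \<in> {1..n - k} \<Longrightarrow> \<alpha> (k + i) = \<omega> ^ (n - k + 1 - i) * \<alpha>' (k + i)"
    unfolding tuple_sim_def by auto
  have split: "\<omega> ^ (n + 1) = \<omega> ^ (k + i) * \<omega> ^ (n - k + 1 - i)" if "i \<le> n - k + 1" for i
    using that assms by (simp flip: power_add)
  have "\<omega> ^ j * c_k n k \<alpha> j = \<omega> ^ (n + 1) * c_k n k \<alpha>' j" for j
  proof (cases "k < j \<and> j \<le> n")
    case True
    define i where "i = j - k"
    then have "j = k + i" "i \<in> {1..n - k}"
      using True by auto
    then show ?thesis
      using rel[of i] split[of i] by (simp add: c_k_def mult_ac)
  qed (use split[of 0] \<omega> in \<open>auto simp: c_k_def\<close>)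
  moreover have "\<omega> \<noteq> 0"
    using \<omega> by (rule contrapos_pn) simp
  ultimately show "rescaling_equiv n (c_k n k \<alpha>) (c_k n k \<alpha>')"
    unfolding rescaling_equiv_def by blast
qed

lemma c_nil_in_cvec: "c_nil n \<in> cvec n"
  and c_id_in_cvec: "1 \<le> n \<Longrightarrow> c_id n \<in> cvec n"
  and c_k_in_cvec: "2 \<le> k \<Longrightarrow> k \<le> n \<Longrightarrow> c_k n k \<alpha> \<in> cvec n"
  by (auto simp: cvec_def c_nil_def c_id_def c_k_def)

lemma not_models_iso_nil_id: "2 \<le> n \<Longrightarrow> \<not> models_iso n (c_nil n) (c_id n)"
  by (simp add: models_iso_iff_rescaling_equiv c_nil_in_cvec c_id_in_cvec
      not_rescaling_equiv_nil_id)

lemma not_models_iso_nil_k: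
  "2 \<le> k \<Longrightarrow> k \<le> n - 1 \<Longrightarrow> \<not> models_iso n (c_nil n) (c_k n k \<alpha>)"
  by (simp add: models_iso_iff_rescaling_equiv c_nil_in_cvec c_k_in_cvec
      not_rescaling_equiv_nil_k)

lemma not_models_iso_id_k:
  "2 \<le> k \<Longrightarrow> k \<le> n - 1 \<Longrightarrow> \<not> models_iso n (c_id n) (c_k n k \<alpha>)"
  by (simp add: models_iso_iff_rescaling_equiv c_id_in_cvec c_k_in_cvec
      not_rescaling_equiv_id_k)

lemma models_iso_c_k_iff:
  assumes "2 \<le> k" "k \<le> n - 1" "2 \<le> k'" "k' \<le> n - 1"
  shows "models_iso n (c_k n k \<alpha>) (c_k n k' \<alpha>') \<longleftrightarrow>
    k = k' \<and> tuple_sim (n - k) (\<lambda>i. \<alpha> (k + i)) (\<lambda>i. \<alpha>' (k + i))"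
proof -
  have "k \<le> n" "k' \<le> n"
    using assms by auto
  then have "models_iso n (c_k n k \<alpha>) (c_k n k' \<alpha>') \<longleftrightarrow>
      rescaling_equiv n (c_k n k \<alpha>) (c_k n k' \<alpha>')"
    using assms by (simp add: models_iso_iff_rescaling_equiv c_k_in_cvec)
  also have "\<dots> \<longleftrightarrow> k = k' \<and> tuple_sim (n - k) (\<lambda>i. \<alpha> (k + i)) (\<lambda>i. \<alpha>' (k + i))"
    using rescaling_equiv_c_k_imp_eq rescaling_equiv_c_k_iff[OF \<open>k \<le> n\<close>] by blast
  finally show ?thesis .
qed

section \<open>Krylov bases\<close>

context vector_space
begin

lemma independent_if_notin_span_prefix:
  assumes "\<And>i. i < m \<Longrightarrow> q i \<notin> span (q ` {..<i})"
  shows "independent (q ` {..<m}) \<and> card (q ` {..<m}) = m"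
  using assms
proof (induction m)
  case (Suc m)
  have IH: "independent (q ` {..<m}) \<and> card (q ` {..<m}) = m"
    using Suc.prems by (intro Suc.IH) simp
  have notin_span: "q m \<notin> span (q ` {..<m})"
    using Suc.prems[of m] by simp
  then have "q m \<notin> q ` {..<m}"
    by (rule contrapos_nn) (rule span_base)
  moreover have "q ` {..<Suc m} = insert (q m) (q ` {..<m})"
    by (simp add: lessThan_Suc)
  ultimately show ?case
    using IH notin_span by (simp add: independent_insertI)
qed (simp add: independent_empty)

lemma funpow_in_span_if_closed:
  assumes F: "module_hom scale scale F"
    and closed: "(F ^^ m) x \<in> span ((\<lambda>j. (F ^^ j) x) ` {..<m})"
  shows "(F ^^ i) x \<in> span ((\<lambda>j. (F ^^ j) x) ` {..<m})"
proof -
  let ?S = "span ((\<lambda>j. (F ^^ j) x) ` {..<m})"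
  have "F ((F ^^ j) x) \<in> ?S" if "j < m" for j
  proof (cases "Suc j = m")
    case False
    then have "(F ^^ Suc j) x \<in> (\<lambda>j. (F ^^ j) x) ` {..<m}"
      using that by (intro imageI) simp
    then show ?thesis
      by (simp add: span_base)
  qed (use closed in auto)
  then have "F ` (\<lambda>j. (F ^^ j) x) ` {..<m} \<subseteq> ?S"
    by auto
  then have "span (F ` (\<lambda>j. (F ^^ j) x) ` {..<m}) \<subseteq> ?S"
    by (simp add: span_minimal)
  then have F_closed: "F y \<in> ?S" if "y \<in> ?S" for y
    using that module_hom.span_image[OF F] by blast
  show ?thesis
  proof (induction i)
    case 0
    show ?case
    proof (cases m)
      case (Suc m')
      then have "(F ^^ 0) x \<in> (\<lambda>j. (F ^^ j) x) ` {..<m}"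
        by blast
      then show ?thesis
        by (simp add: span_base)
    qed (use closed in simp)
  next
    case (Suc i)
    then show ?case
      using F_closed by simp
  qed
qed

text \<open>The first power \<open>F\<^sup>m x\<close> that falls into the span of its predecessors makes that span
  \<open>F\<close>-invariant, hence equal to the whole space, so \<open>m\<close> is the dimension.\<close>

lemma krylov_basis:
  assumes F: "module_hom scale scale F"
    and span_all: "span (range (\<lambda>i. (F ^^ i) x)) = UNIV"
    and dim_UNIV: "dim (UNIV :: 'b set) = n" and n: "0 < n"
  shows "independent ((\<lambda>i. (F ^^ i) x) ` {..<n}) \<and> span ((\<lambda>i. (F ^^ i) x) ` {..<n}) = UNIV
    \<and> inj_on (\<lambda>i. (F ^^ i) x) {..<n}"
proof -
  let ?q = "\<lambda>i. (F ^^ i) x"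
  have "\<exists>m. ?q m \<in> span (?q ` {..<m})"
  proof (rule ccontr)
    assume "\<nexists>m. ?q m \<in> span (?q ` {..<m})"
    then have indep: "independent (?q ` {..<Suc n}) \<and> card (?q ` {..<Suc n}) = Suc n"
      by (intro independent_if_notin_span_prefix) blast
    obtain B where B: "independent B" "UNIV \<subseteq> span B" "card B = n"
      using basis_exists[of UNIV] dim_UNIV by blast
    then have "finite B"
      using n card_ge_0_finite by blast
    then show False
      using independent_span_bound[of B "?q ` {..<Suc n}"] indep B by auto
  qed
  then obtain m where closed: "?q m \<in> span (?q ` {..<m})"
    and minimal: "\<And>i. i < m \<Longrightarrow> ?q i \<notin> span (?q ` {..<i})"
    unfolding exists_least_iff[where P = "\<lambda>m. ?q m \<in> span (?q ` {..<m})"] by blast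
  have indep: "independent (?q ` {..<m}) \<and> card (?q ` {..<m}) = m"
    using minimal by (rule independent_if_notin_span_prefix)
  have "span (range ?q) \<subseteq> span (?q ` {..<m})"
    using funpow_in_span_if_closed[OF F closed] by (intro span_minimal) auto
  then have spans: "span (?q ` {..<m}) = UNIV"
    using span_all by auto
  then have "m = n"
    using dim_eq_card[of "?q ` {..<m}" UNIV] indep dim_UNIV by simp
  then show ?thesis
    using indep spans by (simp add: inj_on_iff_eq_card)
qed

end

locale ordered_basis = vector_space scale
  for scale :: "complex \<Rightarrow> 'a::ab_group_add \<Rightarrow> 'a" +
  fixes b :: "nat \<Rightarrow> 'a" and n :: nat
  assumes basis_independent: "independent (b ` {..<n})"
    and basis_span: "span (b ` {..<n}) = UNIV"
    and basis_inj: "inj_on b {..<n}"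
begin

definition coords :: "'a \<Rightarrow> nat \<Rightarrow> complex" where
  "coords y = (\<lambda>k. if 1 \<le> k \<and> k \<le> n then representation (b ` {..<n}) y (b (k - 1)) else 0)"

lemma coords_add: "coords (y + z) = (\<lambda>k. coords y k + coords z k)"
  unfolding coords_def using representation_add[OF basis_independent] basis_span by auto

lemma coords_scale: "coords (scale a y) = (\<lambda>k. a * coords y k)"
  unfolding coords_def using representation_scale[OF basis_independent] basis_span by auto

lemma coords_zero: "coords 0 = (\<lambda>k. 0)"
  unfolding coords_def representation_zero by simp

lemma coords_sum: "coords (\<Sum>i\<in>I. scale (a i) (w i)) = (\<lambda>k. \<Sum>i\<in>I. a i * coords (w i) k)"
  by (induction I rule: infinite_finite_induct)
    (simp_all add: coords_add coords_scale coords_zero)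

lemma coords_basis: "i < n \<Longrightarrow> coords (b i) = basis_vec (Suc i)"
  unfolding coords_def basis_vec_def representation_basis[OF basis_independent imageI[OF lessThan_iff[THEN iffD2]]]
  using basis_inj by (auto simp: fun_eq_iff inj_on_eq_iff)

lemma sum_coords: "(\<Sum>i<n. scale (coords y (Suc i)) (b i)) = y"
proof -
  have "(\<Sum>i<n. scale (coords y (Suc i)) (b i)) = (\<Sum>v\<in>b ` {..<n}. scale (representation (b ` {..<n}) y v) v)"
    by (simp add: sum.reindex[OF basis_inj] coords_def)
  also have "\<dots> = y"
    using sum_representation_eq[OF basis_independent] basis_span by simp
  finally show ?thesis .
qed

lemma bij_betw_coords: "bij_betw coords UNIV (cvec n)"
proof (rule bij_betw_imageI)
  show "inj coords"
    by (metis injI sum_coords)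
  show "range coords = cvec n"
  proof
    show "range coords \<subseteq> cvec n"
      by (auto simp: coords_def cvec_def)
    show "cvec n \<subseteq> range coords"
    proof
      fix v assume v: "v \<in> cvec n"
      have "coords (\<Sum>i<n. scale (v (Suc i)) (b i)) = (\<lambda>k. \<Sum>i<n. v (Suc i) * basis_vec (Suc i) k)"
        by (simp add: coords_sum coords_basis)
      also have "\<dots> = v"
        using cvec_eq_sum_basis_vec[OF v] by simp
      finally show "v \<in> range coords"
        by (metis rangeI)
    qed
  qed
qed

end

section \<open>Cyclic Leibniz algebras\<close>

locale leibniz_alg =
  fixes scale :: "complex \<Rightarrow> 'a::ab_group_add \<Rightarrow> 'a" and mult :: "'a \<Rightarrow> 'a \<Rightarrow> 'a"
  assumes leibniz_algebra: "leibniz_algebra scale mult"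
begin

sublocale vector_space scale
  using leibniz_algebra unfolding leibniz_algebra_def by blast

lemma mult_add_left: "mult (x + y) z = mult x z + mult y z"
  and mult_add_right: "mult x (y + z) = mult x y + mult x z"
  and mult_scale_left: "mult (scale c x) y = scale c (mult x y)"
  and mult_scale_right: "mult x (scale c y) = scale c (mult x y)"
  and leibniz_identity: "mult x (mult y z) = mult (mult x y) z + mult y (mult x z)"
  using leibniz_algebra unfolding leibniz_algebra_def by blast+

lemma module_hom_mult_left: "module_hom scale scale (\<lambda>y. mult y z)"
  by (simp add: module_hom_iff module_axioms mult_add_left mult_scale_left)

lemma module_hom_mult_right: "module_hom scale scale (mult x)"
  by (simp add: module_hom_iff module_axioms mult_add_right mult_scale_right)

lemma mult_zero_left [simp]: "mult 0 z = 0"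
  using mult_add_left[of 0 0 z] by simp

lemma mult_zero_right [simp]: "mult x 0 = 0"
  using mult_add_right[of x 0 0] by simp

lemma mult_sum_left: "mult (sum f I) z = (\<Sum>i\<in>I. mult (f i) z)"
  by (induction I rule: infinite_finite_induct) (simp_all add: mult_add_left)

lemma mult_sum_right: "mult x (sum f I) = (\<Sum>i\<in>I. mult x (f i))"
  by (induction I rule: infinite_finite_induct) (simp_all add: mult_add_right)

lemma mult_square_left: "mult (mult x x) z = 0"
  using leibniz_identity[of x x z] by simp

lemma mult_left_annihilator:
  assumes "\<And>w. mult y w = 0"
  shows "mult (mult x y) z = 0"
  using leibniz_identity[of x y z] assms by simp

text \<open>\<open>lpower x i\<close> is the left-normed power \<open>x\<^sup>i\<^sup>+\<^sup>1\<close> of the paper.\<close>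

definition lpower :: "'a \<Rightarrow> nat \<Rightarrow> 'a" where
  "lpower x i = (mult x ^^ i) x"

lemma lpower_0 [simp]: "lpower x 0 = x"
  and lpower_Suc [simp]: "lpower x (Suc i) = mult x (lpower x i)"
  by (simp_all add: lpower_def)

lemma mult_lpower_Suc_left: "mult (lpower x (Suc i)) z = 0"
  by (induction i arbitrary: z) (simp_all add: mult_square_left mult_left_annihilator)

lemma mult_span_lpower:
  assumes y: "y \<in> span (range (lpower x))" and z: "z \<in> span (range (lpower x))"
  shows "mult y z \<in> span (range (lpower x))"
proof -
  let ?S = "span (range (lpower x))"
  have "mult x ` ?S = span (mult x ` range (lpower x))"
    by (rule module_hom.span_image[OF module_hom_mult_right, symmetric])
  also have "\<dots> \<subseteq> ?S"
    by (rule span_mono) (auto simp flip: lpower_Suc)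
  finally have "mult x z \<in> ?S"
    using z by blast
  then have "mult (lpower x i) z \<in> ?S" for i
    by (cases i) (simp_all add: span_zero mult_lpower_Suc_left del: lpower_Suc)
  then have "(\<lambda>w. mult w z) ` range (lpower x) \<subseteq> ?S"
    by auto
  then have "span ((\<lambda>w. mult w z) ` range (lpower x)) \<subseteq> ?S"
    by (simp add: span_minimal)
  then show ?thesis
    using y module_hom.span_image[OF module_hom_mult_left, of z "range (lpower x)"] by blast
qed

lemma span_lpower_eq_UNIV:
  assumes "subalg_gen scale mult {x} = UNIV"
  shows "span (range (lpower x)) = UNIV"
proof -
  let ?S = "span (range (lpower x))"
  have "x \<in> ?S"
    using span_base[of x "range (lpower x)"] lpower_0 by (metis rangeI)
  then have "subalg_gen scale mult {x} \<subseteq> ?S"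
    unfolding subalg_gen_def
    by (intro Inter_lower) (auto simp: span_zero span_add span_scale mult_span_lpower)
  then show ?thesis
    using assms by blast
qed

end

locale cyclic_leibniz_alg = leibniz_alg scale mult
  for scale :: "complex \<Rightarrow> 'a::ab_group_add \<Rightarrow> 'a" and mult +
  fixes x :: 'a and n :: nat
  assumes generates: "subalg_gen scale mult {x} = UNIV"
    and dim_UNIV: "dim (UNIV :: 'a set) = n"
    and two_le_dim: "2 \<le> n"
begin

sublocale ordered_basis scale "lpower x" n
proof
  have "independent (lpower x ` {..<n}) \<and> span (lpower x ` {..<n}) = UNIV
      \<and> inj_on (lpower x) {..<n}"
    using krylov_basis[OF module_hom_mult_right, where x = x and n = n] span_lpower_eq_UNIV[OF generates]
      dim_UNIV two_le_dim unfolding lpower_def by simp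
  then show "independent (lpower x ` {..<n})" "span (lpower x ` {..<n}) = UNIV"
    "inj_on (lpower x) {..<n}"
    by blast+
qed

definition param :: "nat \<Rightarrow> complex" where
  "param = coords (lpower x n)"

text \<open>Only the \<open>x\<close>-component of a left factor matters: all higher powers annihilate on the left.\<close>

lemma mult_eq_scale_mult_gen: "mult y z = scale (coords y 1) (mult x z)"
proof -
  obtain m where m: "n = Suc m"
    using two_le_dim by (cases n) auto
  have "mult y z = (\<Sum>i<n. scale (coords y (Suc i)) (mult (lpower x i) z))"
    by (subst (1) sum_coords[symmetric, of y]) (simp add: mult_sum_left mult_scale_left)
  also have "\<dots> = scale (coords y 1) (mult x z)"
    unfolding m sum.lessThan_Suc_shift by (simp add: mult_lpower_Suc_left del: lpower_Suc)
  finally show ?thesis .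
qed

lemma coords_mult_gen: "coords (mult x z) = gen_mult n param (coords z)"
proof -
  have gen: "coords (lpower x (Suc i)) = gen_mult n param (basis_vec (Suc i))" if "i < n" for i
    using that by (cases "Suc i = n")
      (simp_all add: gen_mult_basis_vec coords_basis param_def del: lpower_Suc)
  have "coords (mult x z) = coords (\<Sum>i<n. scale (coords z (Suc i)) (lpower x (Suc i)))"
    by (subst (1) sum_coords[symmetric, of z]) (simp add: mult_sum_right mult_scale_right)
  also have "\<dots> = (\<lambda>k. \<Sum>i<n. coords z (Suc i) * gen_mult n param (basis_vec (Suc i)) k)"
    unfolding coords_sum by (intro ext sum.cong refl) (simp add: gen del: lpower_Suc)
  also have "\<dots> = gen_mult n param (\<lambda>k. \<Sum>i<n. coords z (Suc i) * basis_vec (Suc i) k)"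
    by (simp add: coord_linear_sum[OF coord_linear_gen_mult])
  also have "\<dots> = gen_mult n param (coords z)"
    using cvec_eq_sum_basis_vec[of "coords z" n] bij_betw_coords by (simp add: bij_betw_apply)
  finally show ?thesis .
qed

lemma coords_mult: "coords (mult y z) = cyc_mult n param (coords y) (coords z)"
  unfolding mult_eq_scale_mult_gen[of y z] by (simp add: coords_scale coords_mult_gen cyc_mult_eq_gen_mult)

lemma param_in_cvec: "param \<in> cvec n"
  unfolding param_def using bij_betw_coords by (simp add: bij_betw_apply)

lemma param_1_eq_0: "param 1 = 0"
proof -
  have "mult (lpower x n) x = 0"
    using two_le_dim mult_lpower_Suc_left[of x "n - 1"] by simp
  then have "cyc_mult n param param (coords x) = (\<lambda>k. 0)"
    using coords_mult[of "lpower x n" x] by (simp add: param_def coords_zero)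
  then have "cyc_mult n param param (coords x) 2 = 0"
    by simp
  then show ?thesis
    using coords_basis[of 0] two_le_dim by (simp add: cyc_mult_def basis_vec_def)
qed

lemma iso_to_model_param: "iso_to_model scale mult n param coords"
  unfolding iso_to_model_def
  by (simp add: bij_betw_coords coords_add coords_scale coords_mult)

lemma iso_to_normal_form:
  "(\<exists>f. iso_to_model scale mult n (c_nil n) f) \<or>
   (\<exists>f. iso_to_model scale mult n (c_id n) f) \<or>
   (\<exists>k \<alpha>. 2 \<le> k \<and> k \<le> n - 1 \<and> (\<exists>f. iso_to_model scale mult n (c_k n k \<alpha>) f))"
  using rescaling_equiv_normal_form[OF param_in_cvec param_1_eq_0]
    iso_to_model_if_rescaling_equiv[OF iso_to_model_param] by blast

end

theorem theorem3p5:
  fixes scale :: "complex \<Rightarrow> 'a::ab_group_add \<Rightarrow> 'a"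
    and mult :: "'a \<Rightarrow> 'a \<Rightarrow> 'a"
    and n :: nat
  assumes "n \<ge> 2"
    and "leibniz_algebra scale mult"
    and "vector_space.dim scale (UNIV :: 'a set) = n"
    and "cyclic_alg scale mult"
  shows "((\<exists>f. iso_to_model scale mult n (c_nil n) f) \<or>
          (\<exists>f. iso_to_model scale mult n (c_id n) f) \<or>
          (\<exists>k \<alpha>. 2 \<le> k \<and> k \<le> n - 1 \<and> (\<exists>f. iso_to_model scale mult n (c_k n k \<alpha>) f)))
     \<and> \<not> models_iso n (c_nil n) (c_id n)
     \<and> (\<forall>k \<alpha>. 2 \<le> k \<and> k \<le> n - 1 \<longrightarrow>
          \<not> models_iso n (c_nil n) (c_k n k \<alpha>) \<and> \<not> models_iso n (c_id n) (c_k n k \<alpha>))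
     \<and> (\<forall>k \<alpha> k' \<alpha>'. 2 \<le> k \<and> k \<le> n - 1 \<and> 2 \<le> k' \<and> k' \<le> n - 1 \<longrightarrow>
          (models_iso n (c_k n k \<alpha>) (c_k n k' \<alpha>') \<longleftrightarrow>
             k = k' \<and> tuple_sim (n - k) (\<lambda>i. \<alpha> (k + i)) (\<lambda>i. \<alpha>' (k + i))))"
proof -
  obtain x where "subalg_gen scale mult {x} = UNIV"
    using assms(4) unfolding cyclic_alg_def by blast
  then interpret cyclic_leibniz_alg scale mult x n
    using assms by unfold_locales
  show ?thesis
    using iso_to_normal_form not_models_iso_nil_id[OF assms(1)] not_models_iso_nil_k
      not_models_iso_id_k models_iso_c_k_iff by blast
qed

end
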